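(* Let $\Omega\subset\mathbb R^d$ be a connected bounded open set and $p\in(1,+\infty)$. Let $f\colon\mathbb R^2\to\mathbb R$ and $g\colon\mathbb R\to\mathbb R$ be continuous, and let $\mu$, $\nu$ be positive bounded Radon measures on $\Omega\times\Omega$ and $\Omega$ respectively. Suppose that $$\int_\Omega|u(x)-m_p(u)|^p\,dx=\int_{\Omega\times\Omega}f(u(x),u(y))\,d\mu(x,y)+\int_\Omega g(u(x))\,d\nu(x)$$ for every $u\in C^\infty_c(\Omega)$. Then the same equality holds for $u=1_A$ for every open set $A\subset\Omega$, i.e. $$\int_\Omega|1_A(x)-m_p(1_A)|^p\,dx=\int_{\Omega\times\Omega}f(1_A(x),1_A(y))\,d\mu(x,y)+\int_\Omega g(1_A(x))\,d\nu(x).$$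
   Context: For $u\in L^p(\Omega)$, $m_p(u)$ is the unique minimum point of $t\mapsto\int_\Omega|u(x)-t|^p\,dx$. $1_A$ denotes the characteristic function of $A$. *)

theory Defs
  imports "HOL-Analysis.Analysis"
begin

coinductive smooth_fun :: "('a::euclidean_space \<Rightarrow> real) \<Rightarrow> bool" where
  "u differentiable_on UNIV \<Longrightarrow>
   (\<forall>b\<in>Basis. smooth_fun (\<lambda>x. frechet_derivative u (at x) b)) \<Longrightarrow> smooth_fun u"

text \<open>C-infinity functions with compact support inside Omega (extended by zero outside).\<close>
definition Cc_inf :: "'a::euclidean_space set \<Rightarrow> ('a \<Rightarrow> real) set" where
  "Cc_inf \<Omega> = {u. smooth_fun u \<and> compact (closure {x. u x \<noteq> 0})
                   \<and> closure {x. u x \<noteq> 0} \<subseteq> \<Omega>}"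

definition m_p :: "real \<Rightarrow> 'a::euclidean_space set \<Rightarrow> ('a \<Rightarrow> real) \<Rightarrow> real" where
  "m_p p \<Omega> u = (THE t. \<forall>s. (LINT x:\<Omega>|lebesgue. \<bar>u x - t\<bar> powr p)
                              \<le> (LINT x:\<Omega>|lebesgue. \<bar>u x - s\<bar> powr p))"

end

theory Submission
  imports Defs "HOL-Computational_Algebra.Polynomial"
begin

text \<open>Cover the open set \<open>A\<close> by countably many balls whose closures lie in \<open>A\<close>, and let
  \<open>b\<^sub>i\<close> be a smooth bump that is positive exactly on the \<open>i\<close>-th ball. Then
  \<open>u\<^sub>n = 1 - (\<Prod>i<n. 1 - b\<^sub>i)\<^sup>n\<close> is smooth with compact support in \<open>\<Omega>\<close>, takes values in
  \<open>[0,1]\<close> and converges pointwise to \<open>1\<^sub>A\<close>. Since \<open>\<mu>\<close>, \<open>\<nu>\<close> are finite and \<open>f\<close>, \<open>g\<close> are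
  bounded on \<open>[0,1]\<^sup>2\<close> and \<open>[0,1]\<close>, the right-hand side converges by dominated convergence.
  For the left-hand side, \<open>m\<^sub>p(u)\<close> lies in \<open>[0,1]\<close> whenever \<open>u\<close> does, and \<open>s \<mapsto> \<bar>s\<bar>\<^sup>p\<close>
  is \<open>p\<close>-Lipschitz on \<open>[-1,1]\<close>; evaluating each of the two functionals at the other's
  minimiser shows that the two minimal values differ by at most \<open>p\<close> times the
  \<open>L\<^sup>1(\<Omega>)\<close>-distance of \<open>u\<^sub>n\<close> and \<open>1\<^sub>A\<close>, which tends to \<open>0\<close>.\<close>

subsection \<open>A smooth function of one variable vanishing on the non-positive reals\<close>

definition flat_poly_exp :: "real poly \<Rightarrow> real \<Rightarrow> real" where
  "flat_poly_exp P t = (if t > 0 then poly P (1/t) * exp (-1/t) else 0)"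

text \<open>\<open>d/dt (P(1/t) e\<^sup>-\<^sup>1\<^sup>/\<^sup>t) = Q(1/t) e\<^sup>-\<^sup>1\<^sup>/\<^sup>t\<close> with \<open>Q = X\<^sup>2 (P - P')\<close>.\<close>
definition flat_deriv_poly :: "real poly \<Rightarrow> real poly" where
  "flat_deriv_poly P = [:0,0,1:] * (P - pderiv P)"

lemma poly_div_exp_tendsto_0:
  fixes P :: "real poly" shows "((\<lambda>s. poly P s / exp s) \<longlongrightarrow> 0) at_top"
proof -
  have "((\<lambda>s. \<Sum>i\<le>degree P. coeff P i * (s ^ i / exp s)) \<longlongrightarrow> (\<Sum>i\<le>degree P. coeff P i * 0)) at_top"
    by (intro tendsto_sum tendsto_mult tendsto_const) (auto intro: tendsto_power_div_exp_0)
  moreover have "(\<lambda>s. \<Sum>i\<le>degree P. coeff P i * (s ^ i / exp s)) = (\<lambda>s. poly P s / exp s)"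
    by (auto simp: poly_altdef sum_divide_distrib)
  ultimately show ?thesis by simp
qed

lemma flat_poly_exp_tendsto_0: "(flat_poly_exp P \<longlongrightarrow> 0) (at 0)"
proof (rule filterlim_split_at)
  show "(flat_poly_exp P \<longlongrightarrow> 0) (at_left 0)"
    by (rule tendsto_eventually)
      (auto simp: flat_poly_exp_def eventually_at_left_field intro: exI[of _ "-1"])
  have "(((\<lambda>s. poly P s / exp s) \<circ> inverse) \<longlongrightarrow> 0) (at_right 0)"
    unfolding comp_def
    by (rule filterlim_compose[OF poly_div_exp_tendsto_0 filterlim_inverse_at_top_right])
  moreover have "eventually (\<lambda>t. ((\<lambda>s. poly P s / exp s) \<circ> inverse) t = flat_poly_exp P t) (at_right 0)"
    by (auto simp: flat_poly_exp_def eventually_at_right_field exp_minus field_simps intro!: exI[of _ 1])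
  ultimately show "(flat_poly_exp P \<longlongrightarrow> 0) (at_right 0)"
    using tendsto_cong by blast
qed

lemma flat_poly_exp_has_real_derivative:
  "(flat_poly_exp P has_real_derivative flat_poly_exp (flat_deriv_poly P) t) (at t)"
proof -
  consider "t > 0" | "t < 0" | "t = 0" by linarith
  then show ?thesis
  proof cases
    case 1
    have "((\<lambda>t. poly P (1/t) * exp (-1/t)) has_real_derivative
        poly (pderiv P) (1/t) * (- 1/t^2) * exp (-1/t) + poly P (1/t) * (exp (-1/t) * (1/t^2))) (at t)"
      using 1 by (auto intro!: derivative_eq_intros DERIV_chain2[OF poly_DERIV]
          simp: power2_eq_square field_simps)
    moreover have "poly (pderiv P) (1/t) * (- 1/t^2) * exp (-1/t) + poly P (1/t) * (exp (-1/t) * (1/t^2))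
        = flat_poly_exp (flat_deriv_poly P) t"
      using 1 by (simp add: flat_poly_exp_def flat_deriv_poly_def algebra_simps power2_eq_square divide_simps)
    ultimately have "((\<lambda>t. poly P (1/t) * exp (-1/t)) has_real_derivative
        flat_poly_exp (flat_deriv_poly P) t) (at t)"
      by simp
    then show ?thesis
      by (rule has_field_derivative_transform_within_open[of _ _ _ "{0<..}"])
        (use 1 in \<open>auto simp: flat_poly_exp_def\<close>)
  next
    case 2
    have "((\<lambda>t. 0) has_real_derivative flat_poly_exp (flat_deriv_poly P) t) (at t)"
      using 2 by (simp add: flat_poly_exp_def)
    then show ?thesis
      by (rule has_field_derivative_transform_within_open[of _ _ _ "{..<0}"])
        (use 2 in \<open>auto simp: flat_poly_exp_def\<close>)
  next
    case 3
    text \<open>At \<open>0\<close> the difference quotient is again of the same form, with polynomial \<open>X * P\<close>.\<close>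
    have "eventually (\<lambda>x. flat_poly_exp (pCons 0 P) x = (flat_poly_exp P x - flat_poly_exp P 0) / (x - 0)) (at 0)"
      by (auto simp: eventually_at_filter flat_poly_exp_def)
    then have "((\<lambda>x. (flat_poly_exp P x - flat_poly_exp P 0) / (x - 0)) \<longlongrightarrow> 0) (at 0)"
      by (rule tendsto_cong[THEN iffD1, OF _ flat_poly_exp_tendsto_0])
    moreover have "flat_poly_exp (flat_deriv_poly P) 0 = 0" by (simp add: flat_poly_exp_def)
    ultimately show ?thesis
      using 3 by (simp add: has_field_derivative_iff)
  qed
qed

definition real_smooth :: "(real \<Rightarrow> real) \<Rightarrow> bool" where
  "real_smooth h \<longleftrightarrow> (\<forall>n x. (deriv ^^ n) h differentiable (at x))"

lemma real_smooth_deriv: "real_smooth h \<Longrightarrow> real_smooth (deriv h)"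
  unfolding real_smooth_def by (metis funpow_Suc_right o_apply)

lemma real_smooth_has_real_derivative:
  "real_smooth h \<Longrightarrow> (h has_real_derivative deriv h y) (at y)"
  unfolding real_smooth_def by (metis DERIV_deriv_iff_real_differentiable funpow_0)

lemma real_smooth_flat_poly_exp: "real_smooth (flat_poly_exp P)"
proof -
  have "(deriv ^^ n) (flat_poly_exp P) = flat_poly_exp ((flat_deriv_poly ^^ n) P)" for n
  proof (induction n)
    case (Suc n)
    have "(deriv ^^ Suc n) (flat_poly_exp P) = deriv (flat_poly_exp ((flat_deriv_poly ^^ n) P))"
      by (simp add: Suc)
    also have "\<dots> = flat_poly_exp ((flat_deriv_poly ^^ Suc n) P)"
      using DERIV_imp_deriv[OF flat_poly_exp_has_real_derivative] by (auto simp: fun_eq_iff)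
    finally show ?case .
  qed simp
  then show ?thesis
    unfolding real_smooth_def using flat_poly_exp_has_real_derivative real_differentiable_def by metis
qed

subsection \<open>Smooth functions built from polynomials and smooth real functions\<close>

text \<open>This class is closed under directional derivatives (\<open>smooth_gen_has_derivative\<close>),
  so its members are \<open>C\<^sup>\<infinity>\<close> by coinduction.\<close>
inductive smooth_gen :: "('a::euclidean_space \<Rightarrow> real) \<Rightarrow> bool" where
  const: "smooth_gen (\<lambda>x. c)"
| inner: "smooth_gen (\<lambda>x. inner x v)"
| inner_self: "smooth_gen (\<lambda>x. inner x x)"
| add: "smooth_gen u \<Longrightarrow> smooth_gen w \<Longrightarrow> smooth_gen (\<lambda>x. u x + w x)"
| mult: "smooth_gen u \<Longrightarrow> smooth_gen w \<Longrightarrow> smooth_gen (\<lambda>x. u x * w x)"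
| comp: "real_smooth h \<Longrightarrow> smooth_gen u \<Longrightarrow> smooth_gen (\<lambda>x. h (u x))"

lemma smooth_gen_has_derivative:
  assumes "smooth_gen u"
  obtains D where "\<And>x. (u has_derivative D x) (at x)" "\<And>v. smooth_gen (\<lambda>x. D x v)"
proof -
  from assms have "\<exists>D. (\<forall>x. (u has_derivative D x) (at x)) \<and> (\<forall>v. smooth_gen (\<lambda>x. D x v))"
  proof (induction rule: smooth_gen.induct)
    case (const c)
    show ?case by (rule exI[of _ "\<lambda>x h. 0"]) (auto intro: smooth_gen.const)
  next
    case (inner v)
    show ?case
      by (rule exI[of _ "\<lambda>x h. inner h v"]) (auto intro!: smooth_gen.const derivative_eq_intros)
  next
    case inner_self
    have "smooth_gen (\<lambda>x. inner v x + inner x v)" for v :: 'a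
      using smooth_gen.add[OF smooth_gen.inner smooth_gen.inner, of v v] by (simp add: inner_commute)
    then show ?case
      by (intro exI[of _ "\<lambda>x h. inner h x + inner x h"]) (auto intro!: derivative_eq_intros)
  next
    case (add u w)
    then obtain Du Dw where "\<forall>x. (u has_derivative Du x) (at x)" "\<forall>v. smooth_gen (\<lambda>x. Du x v)"
      "\<forall>x. (w has_derivative Dw x) (at x)" "\<forall>v. smooth_gen (\<lambda>x. Dw x v)" by blast
    then show ?case
      by (intro exI[of _ "\<lambda>x h. Du x h + Dw x h"]) (auto intro!: smooth_gen.add has_derivative_add)
  next
    case (mult u w)
    then obtain Du Dw where "\<forall>x. (u has_derivative Du x) (at x)" "\<forall>v. smooth_gen (\<lambda>x. Du x v)"
      "\<forall>x. (w has_derivative Dw x) (at x)" "\<forall>v. smooth_gen (\<lambda>x. Dw x v)" by blast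
    then show ?case
      using mult.hyps
      by (intro exI[of _ "\<lambda>x h. u x * Dw x h + Du x h * w x"])
        (auto intro!: smooth_gen.add smooth_gen.mult has_derivative_mult)
  next
    case (comp h u)
    then obtain Du where Du: "\<forall>x. (u has_derivative Du x) (at x)" "\<forall>v. smooth_gen (\<lambda>x. Du x v)"
      by blast
    have "((\<lambda>x. h (u x)) has_derivative (\<lambda>k. Du x k * deriv h (u x))) (at x)" for x
      by (rule DERIV_compose_FDERIV[OF real_smooth_has_real_derivative[OF comp.hyps(1)] Du(1)[rule_format]])
    moreover have "smooth_gen (\<lambda>x. Du x v * deriv h (u x))" for v
      by (rule smooth_gen.mult[OF Du(2)[rule_format] smooth_gen.comp[OF real_smooth_deriv comp.hyps(2)]])
        (rule comp.hyps(1))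
    ultimately show ?case
      by (intro exI[of _ "\<lambda>x k. Du x k * deriv h (u x)"] conjI allI)
  qed
  then show ?thesis using that by blast
qed

lemma smooth_fun_if_smooth_gen: "smooth_gen u \<Longrightarrow> smooth_fun u"
proof (coinduction arbitrary: u)
  case (smooth_fun u)
  then obtain D where D: "\<And>x. (u has_derivative D x) (at x)" "\<And>v. smooth_gen (\<lambda>x. D x v)"
    using smooth_gen_has_derivative by blast
  have "frechet_derivative u (at x) = D x" for x
    using frechet_derivative_at D(1) by metis
  then show ?case
    using D by (auto simp: differentiable_on_def differentiable_def)
qed

lemma smooth_gen_imp_continuous: "smooth_gen u \<Longrightarrow> continuous_on UNIV u"
  by (rule smooth_gen_has_derivative)
    (auto intro: continuous_at_imp_continuous_on has_derivative_continuous)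

lemma smooth_gen_diff:
  assumes "smooth_gen u" "smooth_gen w" shows "smooth_gen (\<lambda>x. u x - w x)"
proof -
  have "smooth_gen (\<lambda>x. u x + (-1) * w x)"
    using assms by (intro smooth_gen.add smooth_gen.mult smooth_gen.const)
  then show ?thesis by simp
qed

lemma smooth_gen_power: "smooth_gen u \<Longrightarrow> smooth_gen (\<lambda>x. u x ^ n)"
  by (induction n) (auto intro: smooth_gen.const smooth_gen.mult)

lemma smooth_gen_prod:
  "finite I \<Longrightarrow> (\<And>i. i \<in> I \<Longrightarrow> smooth_gen (f i)) \<Longrightarrow> smooth_gen (\<lambda>x. \<Prod>i\<in>I. f i x)"
  by (induction I rule: finite_induct) (auto intro: smooth_gen.const smooth_gen.mult)

definition bump :: "'a::euclidean_space \<Rightarrow> real \<Rightarrow> 'a \<Rightarrow> real" where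
  "bump c r x = flat_poly_exp 1 (r\<^sup>2 - (norm (x - c))\<^sup>2)"

lemma smooth_gen_bump: "smooth_gen (bump c r)"
proof -
  have "(norm (x - c))\<^sup>2 = inner x x - 2 * inner x c + inner c c" for x
    unfolding power2_norm_eq_inner inner_diff_left inner_diff_right inner_commute[of c x] by simp
  moreover have "smooth_gen (\<lambda>x. flat_poly_exp 1 (r\<^sup>2 - (inner x x - 2 * inner x c + inner c c)))"
    by (intro smooth_gen.comp[OF real_smooth_flat_poly_exp] smooth_gen_diff smooth_gen.add
        smooth_gen.const smooth_gen.inner_self smooth_gen.mult smooth_gen.inner)
  ultimately show ?thesis unfolding bump_def by simp
qed

lemma bump_pos_iff:
  assumes "r > 0" shows "0 < bump c r x \<longleftrightarrow> x \<in> ball c r"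
proof -
  have "0 < bump c r x \<longleftrightarrow> (norm (x - c))\<^sup>2 < r\<^sup>2" by (simp add: bump_def flat_poly_exp_def)
  also have "\<dots> \<longleftrightarrow> norm (x - c) < r" using assms by (metis abs_le_square_iff abs_of_pos abs_norm_cancel not_le)
  finally show ?thesis by (simp add: dist_norm norm_minus_commute)
qed

lemma bump_nonneg: "0 \<le> bump c r x"
  by (simp add: bump_def flat_poly_exp_def)

lemma bump_le_1: "bump c r x \<le> 1"
  by (simp add: bump_def flat_poly_exp_def)

subsection \<open>Smooth approximation of the indicator of an open set\<close>

lemma open_Union_countable_balls:
  fixes A :: "'a::euclidean_space set"
  assumes "open A" "A \<noteq> {}"
  shows "\<exists>(c :: nat \<Rightarrow> 'a) r. (\<forall>i. r i > 0) \<and> (\<forall>i. cball (c i) (r i) \<subseteq> A)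
    \<and> (\<Union>i. ball (c i) (r i)) = A"
proof -
  define F where "F = {ball c r | c r. r > 0 \<and> cball c r \<subseteq> A}"
  have "\<Union>F = A"
  proof
    show "\<Union>F \<subseteq> A" by (auto simp: F_def)
    show "A \<subseteq> \<Union>F"
    proof
      fix x assume "x \<in> A"
      then obtain e where "e > 0" "ball x e \<subseteq> A" using assms(1) open_contains_ball by blast
      then have "ball x (e/2) \<in> F" unfolding F_def by fastforce
      moreover have "x \<in> ball x (e/2)" using \<open>e > 0\<close> by simp
      ultimately show "x \<in> \<Union>F" by blast
    qed
  qed
  moreover have "\<And>S. S \<in> F \<Longrightarrow> open S" by (auto simp: F_def)
  then obtain F' where F': "F' \<subseteq> F" "countable F'" "\<Union>F' = \<Union>F" by (rule Lindelof)
  ultimately have "F' \<noteq> {}" using assms(2) by auto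
  define B where "B = from_nat_into F'"
  have B: "range B = F'" unfolding B_def using range_from_nat_into[OF \<open>F' \<noteq> {}\<close> F'(2)] .
  have "\<forall>i. \<exists>c r. B i = ball c r \<and> r > 0 \<and> cball c r \<subseteq> A"
  proof
    fix i have "B i \<in> F" using B F'(1) by auto
    then show "\<exists>c r. B i = ball c r \<and> r > 0 \<and> cball c r \<subseteq> A"
      unfolding F_def by blast
  qed
  then obtain c r where cr: "\<forall>i. B i = ball (c i) (r i) \<and> r i > 0 \<and> cball (c i) (r i) \<subseteq> A"
    by metis
  then have "(\<Union>i. ball (c i) (r i)) = \<Union>(range B)" by auto
  with B F'(3) \<open>\<Union>F = A\<close> cr show ?thesis
    by (intro exI[of _ c] exI[of _ r]) auto
qed

definition ball_approx :: "(nat \<Rightarrow> 'a::euclidean_space) \<Rightarrow> (nat \<Rightarrow> real) \<Rightarrow> nat \<Rightarrow> 'a \<Rightarrow> real" where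
  "ball_approx c r n x = 1 - (\<Prod>i<n. 1 - bump (c i) (r i) x) ^ n"

lemma smooth_gen_ball_approx: "smooth_gen (ball_approx c r n)"
proof -
  have "smooth_gen (\<lambda>x. \<Prod>i<n. 1 - bump (c i) (r i) x)"
    by (rule smooth_gen_prod) (simp_all add: smooth_gen_diff smooth_gen.const smooth_gen_bump)
  then show ?thesis
    unfolding ball_approx_def[abs_def] by (rule smooth_gen_diff[OF smooth_gen.const smooth_gen_power])
qed

lemma prod_one_minus_bump_bounds:
  fixes c :: "nat \<Rightarrow> 'a::euclidean_space"
  shows "0 \<le> (\<Prod>i<n. 1 - bump (c i) (r i) x)" "(\<Prod>i<n. 1 - bump (c i) (r i) x) \<le> 1"
  by (auto intro!: prod_nonneg prod_le_1 simp: bump_nonneg bump_le_1)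

lemma ball_approx_bounds: "0 \<le> ball_approx c r n x" "ball_approx c r n x \<le> 1"
  using prod_one_minus_bump_bounds[of c r x n] by (auto simp: ball_approx_def power_le_one)

lemma ball_approx_eq_0:
  assumes "\<And>i. r i > 0" "x \<notin> (\<Union>i<n. ball (c i) (r i))"
  shows "ball_approx c r n x = 0"
proof -
  have "bump (c i) (r i) x = 0" if "i < n" for i
    using assms(2) that bump_pos_iff[OF assms(1)] bump_nonneg[of "c i" "r i" x]
    by (metis UN_I lessThan_iff order_less_le)
  then show ?thesis by (simp add: ball_approx_def)
qed

lemma ball_approx_in_Cc_inf:
  assumes "\<And>i. r i > 0" "\<And>i. cball (c i) (r i) \<subseteq> \<Omega>"
  shows "ball_approx c r n \<in> Cc_inf \<Omega>"
proof -
  have supp: "{x. ball_approx c r n x \<noteq> 0} \<subseteq> (\<Union>i<n. cball (c i) (r i))"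
  proof
    fix x assume "x \<in> {x. ball_approx c r n x \<noteq> 0}"
    then obtain i where "i < n" "x \<in> ball (c i) (r i)" using ball_approx_eq_0[of r, OF assms(1)] by blast
    then show "x \<in> (\<Union>i<n. cball (c i) (r i))" using ball_subset_cball by blast
  qed
  then have "closure {x. ball_approx c r n x \<noteq> 0} \<subseteq> (\<Union>i<n. cball (c i) (r i))"
    by (rule closure_minimal) (simp add: closed_UN)
  moreover have "bounded {x. ball_approx c r n x \<noteq> 0}"
    by (rule bounded_subset[OF _ supp]) auto
  moreover have "(\<Union>i<n. cball (c i) (r i)) \<subseteq> \<Omega>" using assms(2) by blast
  ultimately show ?thesis
    unfolding Cc_inf_def using smooth_fun_if_smooth_gen[OF smooth_gen_ball_approx]
    by (auto simp: compact_closure)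
qed

lemma ball_approx_tendsto_indicator:
  assumes "\<And>i. r i > 0"
  shows "(\<lambda>n. ball_approx c r n x) \<longlonglongrightarrow> indicator (\<Union>i. ball (c i) (r i)) x"
proof (cases "x \<in> (\<Union>i. ball (c i) (r i))")
  case False
  then have "ball_approx c r n x = 0" for n by (intro ball_approx_eq_0[of r, OF assms]) blast
  with False show ?thesis by simp
next
  case True
  then obtain k where k: "x \<in> ball (c k) (r k)" by blast
  define q where "q = bump (c k) (r k) x"
  have q: "0 < q" "q \<le> 1"
    using bump_pos_iff[of "r k" "c k" x] assms k bump_le_1 by (simp_all add: q_def)
  text \<open>From the \<open>k\<close>-th term on, the product contains the factor \<open>1 - q < 1\<close>.\<close>
  have ev: "eventually (\<lambda>n. 1 - (1 - q) ^ n \<le> ball_approx c r n x) sequentially"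
  proof (rule eventually_sequentiallyI[of "Suc k"])
    fix n assume "Suc k \<le> n"
    then have "(\<Prod>i<n. 1 - bump (c i) (r i) x)
        = (1 - q) * (\<Prod>i\<in>{..<n} - {k}. 1 - bump (c i) (r i) x)"
      by (subst prod.remove[of _ k]) (auto simp: q_def)
    also have "\<dots> \<le> 1 - q"
      using q by (intro mult_left_le prod_le_1) (auto simp: bump_le_1 bump_nonneg)
    finally have "(\<Prod>i<n. 1 - bump (c i) (r i) x) ^ n \<le> (1 - q) ^ n"
      by (intro power_mono prod_one_minus_bump_bounds)
    then show "1 - (1 - q) ^ n \<le> ball_approx c r n x"
      unfolding ball_approx_def by simp
  qed
  have "(\<lambda>n. (1 - q) ^ n) \<longlonglongrightarrow> 0"
    using q by (intro LIMSEQ_power_zero) auto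
  then have "(\<lambda>n. 1 - (1 - q) ^ n) \<longlonglongrightarrow> 1 - 0"
    by (intro tendsto_diff tendsto_const)
  then have "(\<lambda>n. ball_approx c r n x) \<longlonglongrightarrow> 1"
    by (intro tendsto_sandwich[OF ev _ _ tendsto_const]) (simp_all add: ball_approx_bounds)
  with True show ?thesis by simp
qed

lemma Cc_inf_approx_indicator:
  fixes A \<Omega> :: "'a::euclidean_space set"
  assumes "open A" "A \<subseteq> \<Omega>"
  obtains u :: "nat \<Rightarrow> 'a \<Rightarrow> real"
  where "\<And>n. u n \<in> Cc_inf \<Omega>" "\<And>n. continuous_on UNIV (u n)"
    "\<And>n x. u n x \<in> {0..1}" "\<And>x. (\<lambda>n. u n x) \<longlonglongrightarrow> indicator A x"
proof (cases "A = {}")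
  case True
  have "(\<lambda>x. 0) \<in> Cc_inf \<Omega>"
    using smooth_fun_if_smooth_gen[OF smooth_gen.const] by (simp add: Cc_inf_def)
  then show ?thesis
    by (rule that[of "\<lambda>n x. 0"]) (simp_all add: True)
next
  case False
  from open_Union_countable_balls[OF assms(1) False]
  obtain c :: "nat \<Rightarrow> 'a" where "\<exists>r. (\<forall>i. r i > 0) \<and> (\<forall>i. cball (c i) (r i) \<subseteq> A)
      \<and> (\<Union>i. ball (c i) (r i)) = A"
    by (rule exE)
  then obtain r where "(\<forall>i. r i > 0) \<and> (\<forall>i. cball (c i) (r i) \<subseteq> A) \<and> (\<Union>i. ball (c i) (r i)) = A"
    by (rule exE)
  then have cr: "\<And>i. r i > 0" "\<And>i. cball (c i) (r i) \<subseteq> A" "(\<Union>i. ball (c i) (r i)) = A"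
    by simp_all
  show ?thesis
  proof (rule that[of "ball_approx c r"])
    have "cball (c i) (r i) \<subseteq> \<Omega>" for i using cr(2) assms(2) by (rule subset_trans)
    then show "ball_approx c r n \<in> Cc_inf \<Omega>" for n
      by (rule ball_approx_in_Cc_inf[of r, OF cr(1)])
    show "continuous_on UNIV (ball_approx c r n)" for n
      by (rule smooth_gen_imp_continuous[OF smooth_gen_ball_approx])
    show "ball_approx c r n x \<in> {0..1}" for n x
      using ball_approx_bounds[of c r n x] by simp
    show "(\<lambda>n. ball_approx c r n x) \<longlonglongrightarrow> indicator A x" for x
      using ball_approx_tendsto_indicator[of r c x, OF cr(1)] unfolding cr(3) .
  qed
qed

lemma powr_diff_mvt:
  fixes a b p :: real
  assumes "0 \<le> a" "a < b" "0 < p"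
  obtains z where "a < z" "z < b" "b powr p - a powr p = (b - a) * (p * z powr (p - 1))"
proof -
  have "continuous_on {a..b} (\<lambda>x. x powr p)"
    using assms by (intro continuous_on_powr' continuous_on_id continuous_on_const) auto
  moreover have "(\<lambda>x. x powr p) differentiable (at x)" if "a < x" for x
    using has_real_derivative_powr[of x p] that assms real_differentiable_def by fastforce
  ultimately obtain l z where lz: "a < z" "z < b" "((\<lambda>x. x powr p) has_real_derivative l) (at z)"
    "b powr p - a powr p = (b - a) * l"
    using MVT[OF assms(2)] by blast
  have "l = p * z powr (p - 1)"
    using DERIV_unique[OF lz(3) has_real_derivative_powr[of z p]] lz(1) assms(1) by simp
  with lz that show ?thesis by blast
qed

lemma abs_powr_diff_le:
  fixes a b p :: real
  assumes "a \<in> {0..1}" "b \<in> {0..1}" "1 \<le> p"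
  shows "\<bar>a powr p - b powr p\<bar> \<le> p * \<bar>a - b\<bar>"
proof -
  have *: "y powr p - x powr p \<le> p * (y - x)" if xy: "0 \<le> x" "x < y" "y \<le> 1" for x y :: real
  proof -
    obtain z where z: "x < z" "z < y" "y powr p - x powr p = (y - x) * (p * z powr (p - 1))"
      using powr_diff_mvt[OF xy(1,2), of p] assms(3) by auto
    have "z powr (p - 1) \<le> 1"
      using z xy assms(3) powr_mono2[of "p - 1" z 1] by simp
    then have "(y - x) * (p * z powr (p - 1)) \<le> (y - x) * (p * 1)"
      using xy assms(3) by (intro mult_left_mono) auto
    with z show ?thesis by simp
  qed
  consider "a < b" | "a = b" | "b < a" by linarith
  then show ?thesis
  proof cases
    case 1
    have "a powr p \<le> b powr p" using 1 assms by (intro powr_mono2) auto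
    with *[of a b] 1 assms show ?thesis by simp
  next
    case 3
    have "b powr p \<le> a powr p" using 3 assms by (intro powr_mono2) auto
    with *[of b a] 3 assms show ?thesis by simp
  qed simp
qed

lemma abs_midpoint_powr_less:
  fixes x y p :: real
  assumes "x \<noteq> y" "1 < p"
  shows "\<bar>(x + y) / 2\<bar> powr p < (\<bar>x\<bar> powr p + \<bar>y\<bar> powr p) / 2"
proof -
  text \<open>Strict convexity on \<open>[0,\<infinity>)\<close>: the secant slopes on the two halves of \<open>[a,b]\<close>
    are values of the strictly increasing derivative at two distinct points.\<close>
  have key: "((a + b) / 2) powr p < (a powr p + b powr p) / 2" if ab: "0 \<le> a" "a < b" for a b :: real
  proof -
    define m where "m = (a + b) / 2"
    have am: "a < m" "m < b" using ab by (auto simp: m_def)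
    obtain z1 where z1: "a < z1" "z1 < m" "m powr p - a powr p = (m - a) * (p * z1 powr (p - 1))"
      using powr_diff_mvt[OF ab(1) am(1), of p] assms(2) by auto
    obtain z2 where z2: "m < z2" "z2 < b" "b powr p - m powr p = (b - m) * (p * z2 powr (p - 1))"
      using powr_diff_mvt[of m b p] am ab assms(2) by auto
    have "z1 powr (p - 1) < z2 powr (p - 1)"
      using z1 z2 ab assms(2) by (intro powr_less_mono2) auto
    then have "p * z1 powr (p - 1) < p * z2 powr (p - 1)" using assms(2) by simp
    moreover have "m - a = b - m" "0 < b - m" using ab by (auto simp: m_def field_simps)
    ultimately have "(m - a) * (p * z1 powr (p - 1)) < (b - m) * (p * z2 powr (p - 1))"
      by (metis mult_strict_left_mono)
    with z1 z2 show ?thesis by (simp add: m_def[symmetric])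
  qed
  have mono: "\<bar>(x + y) / 2\<bar> powr p \<le> ((\<bar>x\<bar> + \<bar>y\<bar>) / 2) powr p"
    using assms(2) by (intro powr_mono2) auto
  consider "\<bar>x\<bar> = \<bar>y\<bar>" | "\<bar>x\<bar> < \<bar>y\<bar>" | "\<bar>y\<bar> < \<bar>x\<bar>" by linarith
  then show ?thesis
  proof cases
    case 1
    then have "y = - x" "x \<noteq> 0" using assms(1) by (auto simp: abs_eq_iff)
    then show ?thesis by simp
  next
    case 2
    with mono key[of "\<bar>x\<bar>" "\<bar>y\<bar>"] show ?thesis by simp
  next
    case 3
    with mono key[of "\<bar>y\<bar>" "\<bar>x\<bar>"] show ?thesis by (simp add: add.commute)
  qed
qed

lemma set_integrable_bounded:
  fixes f :: "'a \<Rightarrow> real"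
  assumes "S \<in> sets M" "emeasure M S \<noteq> \<infinity>" "f \<in> borel_measurable M" "\<And>x. \<bar>f x\<bar> \<le> B"
  shows "set_integrable M S f"
  unfolding set_integrable_def
proof (rule Bochner_Integration.integrable_bound)
  show "integrable M (\<lambda>x. indicator S x *\<^sub>R B)"
    using assms(1,2) by (intro integrable_scaleR_left integrable_real_indicator) (auto simp: top.not_eq_extremum)
  show "(\<lambda>x. indicator S x *\<^sub>R f x) \<in> borel_measurable M"
    using assms(1,3) by measurable
  show "AE x in M. norm (indicator S x *\<^sub>R f x) \<le> norm (indicator S x *\<^sub>R B)"
    using assms(4) by (intro AE_I2) (auto simp: indicator_def intro: order_trans[OF _ abs_ge_self])
qed

lemma set_integral_bounded_tendsto:
  fixes w :: "nat \<Rightarrow> 'a \<Rightarrow> real"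
  assumes "S \<in> sets M" "emeasure M S \<noteq> \<infinity>" "\<And>n. w n \<in> borel_measurable M"
    "\<And>n z. \<bar>w n z\<bar> \<le> B" "\<And>z. (\<lambda>n. w n z) \<longlonglongrightarrow> W z"
  shows "(\<lambda>n. LINT z:S|M. w n z) \<longlonglongrightarrow> (LINT z:S|M. W z)"
  unfolding set_lebesgue_integral_def
proof (rule integral_dominated_convergence[where w="\<lambda>z. indicator S z * B"])
  have "W \<in> borel_measurable M"
    by (rule borel_measurable_LIMSEQ_metric[OF assms(3,5)])
  then show "(\<lambda>z. indicator S z *\<^sub>R W z) \<in> borel_measurable M" using assms(1) by measurable
  show "(\<lambda>z. indicator S z *\<^sub>R w n z) \<in> borel_measurable M" for n using assms(1,3) by measurable
  show "integrable M (\<lambda>z. indicator S z * B)"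
    using assms(1,2) by (intro integrable_mult_left integrable_real_indicator) (auto simp: top.not_eq_extremum)
  show "AE z in M. (\<lambda>n. indicator S z *\<^sub>R w n z) \<longlonglongrightarrow> indicator S z *\<^sub>R W z"
    by (intro AE_I2 tendsto_intros assms(5))
  show "AE z in M. norm (indicator S z *\<^sub>R w n z) \<le> indicator S z * B" for n
    using assms(4)[of n] by (intro AE_I2) (auto simp: indicator_def)
qed

lemma set_integral_pos:
  fixes h :: "'a \<Rightarrow> real"
  assumes "S \<in> sets M" "emeasure M S \<noteq> 0" "set_integrable M S h" "\<And>x. x \<in> S \<Longrightarrow> 0 < h x"
  shows "0 < (LINT x:S|M. h x)"
proof -
  have int: "integrable M (\<lambda>x. indicator S x * h x)"
    using assms(3) by (simp add: set_integrable_def)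
  have nonneg: "AE x in M. 0 \<le> indicator S x * h x"
    using assms(4) by (intro AE_I2) (auto simp: indicator_def less_imp_le)
  have "(LINT x:S|M. h x) \<noteq> 0"
  proof
    assume "(LINT x:S|M. h x) = 0"
    then have "AE x in M. indicator S x * h x = 0"
      using integral_nonneg_eq_0_iff_AE[OF int nonneg] by (simp add: set_lebesgue_integral_def)
    then have "AE x in M. x \<notin> S"
      by eventually_elim (auto simp: indicator_def dest: assms(4))
    with assms(1,2) show False
      using AE_iff_null_sets by (auto simp: null_sets_def)
  qed
  moreover have "0 \<le> (LINT x:S|M. h x)"
    unfolding set_lebesgue_integral_def using nonneg int by (simp add: integral_nonneg_AE)
  ultimately show ?thesis by simp
qed

subsection \<open>The functional minimised by \<open>m_p\<close>\<close>

definition p_deviation :: "real \<Rightarrow> 'a::euclidean_space set \<Rightarrow> ('a \<Rightarrow> real) \<Rightarrow> real \<Rightarrow> real" where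
  "p_deviation p \<Omega> u t = (LINT x:\<Omega>|lebesgue. \<bar>u x - t\<bar> powr p)"

lemma m_p_eq_THE: "m_p p \<Omega> u = (THE t. \<forall>s. p_deviation p \<Omega> u t \<le> p_deviation p \<Omega> u s)"
  by (simp add: m_p_def p_deviation_def)

lemma set_integrable_abs_diff_powr:
  fixes u :: "'a::euclidean_space \<Rightarrow> real"
  assumes "\<Omega> \<in> lmeasurable" "u \<in> borel_measurable lebesgue" "\<And>x. u x \<in> {0..1}" "0 \<le> p"
  shows "set_integrable lebesgue \<Omega> (\<lambda>x. \<bar>u x - t\<bar> powr p)"
proof (rule set_integrable_bounded)
  show "\<bar>\<bar>u x - t\<bar> powr p\<bar> \<le> (1 + \<bar>t\<bar>) powr p" for x
    using assms(3)[of x] assms(4) powr_mono2[of p "\<bar>u x - t\<bar>" "1 + \<bar>t\<bar>"] by auto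
qed (use assms(1,2) in \<open>auto simp: fmeasurable_def\<close>)

lemma p_deviation_le:
  fixes u v :: "'a::euclidean_space \<Rightarrow> real"
  assumes \<Omega>: "\<Omega> \<in> lmeasurable" and p: "1 \<le> p"
    and u: "u \<in> borel_measurable lebesgue" "\<And>x. u x \<in> {0..1}"
    and v: "v \<in> borel_measurable lebesgue" "\<And>x. v x \<in> {0..1}"
    and ts: "t \<in> {0..1}" "s \<in> {0..1}"
  shows "p_deviation p \<Omega> u t
    \<le> p_deviation p \<Omega> v s + p * (LINT x:\<Omega>|lebesgue. \<bar>(u x - t) - (v x - s)\<bar>)"
proof -
  have int_u: "set_integrable lebesgue \<Omega> (\<lambda>x. \<bar>u x - t\<bar> powr p)"
    and int_v: "set_integrable lebesgue \<Omega> (\<lambda>x. \<bar>v x - s\<bar> powr p)"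
    using p by (intro set_integrable_abs_diff_powr[OF \<Omega> u] set_integrable_abs_diff_powr[OF \<Omega> v]; simp)+
  have "\<bar>\<bar>(u x - t) - (v x - s)\<bar>\<bar> \<le> 2" for x
    using u(2)[of x] v(2)[of x] ts by auto
  then have "set_integrable lebesgue \<Omega> (\<lambda>x. \<bar>(u x - t) - (v x - s)\<bar>)"
    using \<Omega> u(1) v(1) by (intro set_integrable_bounded) (auto simp: fmeasurable_def)
  then have int_uv: "set_integrable lebesgue \<Omega> (\<lambda>x. \<bar>v x - s\<bar> powr p + p * \<bar>(u x - t) - (v x - s)\<bar>)"
    using int_v by (intro set_integral_add(1) set_integrable_mult_right)
  have "p_deviation p \<Omega> u t \<le> (LINT x:\<Omega>|lebesgue. \<bar>v x - s\<bar> powr p + p * \<bar>(u x - t) - (v x - s)\<bar>)"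
    unfolding p_deviation_def
  proof (rule set_integral_mono[OF int_u int_uv])
    fix x
    have "\<bar>u x - t\<bar> \<in> {0..1}" "\<bar>v x - s\<bar> \<in> {0..1}" using u(2)[of x] v(2)[of x] ts by auto
    then have "\<bar>\<bar>u x - t\<bar> powr p - \<bar>v x - s\<bar> powr p\<bar> \<le> p * \<bar>\<bar>u x - t\<bar> - \<bar>v x - s\<bar>\<bar>"
      using p by (rule abs_powr_diff_le)
    also have "\<dots> \<le> p * \<bar>(u x - t) - (v x - s)\<bar>"
      using p by (intro mult_left_mono) auto
    finally show "\<bar>u x - t\<bar> powr p \<le> \<bar>v x - s\<bar> powr p + p * \<bar>(u x - t) - (v x - s)\<bar>"
      by simp
  qed
  also have "\<dots> = p_deviation p \<Omega> v s + p * (LINT x:\<Omega>|lebesgue. \<bar>(u x - t) - (v x - s)\<bar>)"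
    unfolding p_deviation_def using int_v \<open>set_integrable lebesgue \<Omega> (\<lambda>x. \<bar>(u x - t) - (v x - s)\<bar>)\<close>
    by (simp add: set_integral_add(2) set_integrable_mult_right)
  finally show ?thesis .
qed

lemma p_deviation_lipschitz:
  fixes u :: "'a::euclidean_space \<Rightarrow> real"
  assumes \<Omega>: "\<Omega> \<in> lmeasurable" and p: "1 \<le> p"
    and u: "u \<in> borel_measurable lebesgue" "\<And>x. u x \<in> {0..1}"
  shows "(measure lebesgue \<Omega> * p)-lipschitz_on {0..1} (p_deviation p \<Omega> u)"
proof (rule lipschitz_onI)
  have \<Omega>s: "\<Omega> \<in> sets lebesgue" and \<Omega>f: "emeasure lebesgue \<Omega> \<noteq> \<infinity>"
    using fmeasurableD[OF \<Omega>] fmeasurableD2[OF \<Omega>] by (auto simp: infinity_ennreal_def)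
  have *: "p_deviation p \<Omega> u t \<le> p_deviation p \<Omega> u s + measure lebesgue \<Omega> * p * \<bar>t - s\<bar>"
    if "t \<in> {0..1}" "s \<in> {0..1}" for t s
  proof -
    have "(LINT x:\<Omega>|lebesgue. \<bar>(u x - t) - (u x - s)\<bar>) = (LINT x:\<Omega>|lebesgue. \<bar>t - s\<bar>)"
      by (simp add: abs_minus_commute)
    also have "\<dots> = measure lebesgue \<Omega> * \<bar>t - s\<bar>"
      using set_integral_const[OF \<Omega>s \<Omega>f, of "\<bar>t - s\<bar>"] by simp
    finally show ?thesis using p_deviation_le[OF \<Omega> p u u that] by (simp add: ac_simps)
  qed
  fix t s :: real assume "t \<in> {0..1}" "s \<in> {0..1}"
  then show "dist (p_deviation p \<Omega> u t) (p_deviation p \<Omega> u s) \<le> measure lebesgue \<Omega> * p * dist t s"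
    using *[of t s] *[of s t] by (auto simp: dist_real_def abs_minus_commute)
qed (use p in simp)

text \<open>Moving \<open>t\<close> towards \<open>[0,1]\<close>, the range of \<open>u\<close>, decreases \<open>\<bar>u x - t\<bar>\<close> pointwise.\<close>
lemma p_deviation_clamp_le:
  fixes u :: "'a::euclidean_space \<Rightarrow> real"
  assumes "\<Omega> \<in> lmeasurable" "0 \<le> p" "u \<in> borel_measurable lebesgue" "\<And>x. u x \<in> {0..1}"
  shows "p_deviation p \<Omega> u (max 0 (min 1 s)) \<le> p_deviation p \<Omega> u s"
  unfolding p_deviation_def
proof (rule set_integral_mono[OF set_integrable_abs_diff_powr set_integrable_abs_diff_powr])
  show "\<bar>u x - max 0 (min 1 s)\<bar> powr p \<le> \<bar>u x - s\<bar> powr p" for x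
    using assms(2) assms(4)[of x] by (intro powr_mono2) auto
qed (use assms in auto)

lemma p_deviation_midpoint_less:
  fixes u :: "'a::euclidean_space \<Rightarrow> real"
  assumes \<Omega>: "\<Omega> \<in> lmeasurable" "0 < measure lebesgue \<Omega>" and p: "1 < p"
    and u: "u \<in> borel_measurable lebesgue" "\<And>x. u x \<in> {0..1}" and "t \<noteq> s"
  shows "2 * p_deviation p \<Omega> u ((t + s) / 2) < p_deviation p \<Omega> u t + p_deviation p \<Omega> u s"
proof -
  define h where "h x = \<bar>u x - t\<bar> powr p + \<bar>u x - s\<bar> powr p - 2 * \<bar>u x - (t + s) / 2\<bar> powr p" for x
  have int: "set_integrable lebesgue \<Omega> (\<lambda>x. \<bar>u x - r\<bar> powr p)" for r
    using p by (intro set_integrable_abs_diff_powr[OF \<Omega>(1) u]) simp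
  then have "set_integrable lebesgue \<Omega> h"
    unfolding h_def[abs_def] by (intro set_integral_diff(1) set_integral_add(1) set_integrable_mult_right)
  moreover have "0 < h x" for x
  proof -
    have mid: "((u x - t) + (u x - s)) / 2 = u x - (t + s) / 2" by (simp add: field_simps)
    have "\<bar>u x - (t + s) / 2\<bar> powr p < (\<bar>u x - t\<bar> powr p + \<bar>u x - s\<bar> powr p) / 2"
      using abs_midpoint_powr_less[of "u x - t" "u x - s" p, unfolded mid] \<open>t \<noteq> s\<close> p by simp
    then show ?thesis by (simp add: h_def)
  qed
  moreover have "emeasure lebesgue \<Omega> = ennreal (measure lebesgue \<Omega>)"
    by (rule emeasure_eq_measure2[OF \<Omega>(1)])
  then have "emeasure lebesgue \<Omega> \<noteq> 0"
    using \<Omega>(2) by simp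
  ultimately have "0 < (LINT x:\<Omega>|lebesgue. h x)"
    using \<Omega>(1) by (intro set_integral_pos) auto
  also have "(LINT x:\<Omega>|lebesgue. h x)
      = p_deviation p \<Omega> u t + p_deviation p \<Omega> u s - 2 * p_deviation p \<Omega> u ((t + s) / 2)"
    unfolding h_def p_deviation_def
    using int by (simp add: set_integral_diff(2) set_integral_add(2) set_integrable_mult_right)
  finally show ?thesis by simp
qed

lemma m_p_minimises:
  fixes u :: "'a::euclidean_space \<Rightarrow> real"
  assumes \<Omega>: "\<Omega> \<in> lmeasurable" "0 < measure lebesgue \<Omega>" and p: "1 < p"
    and u: "u \<in> borel_measurable lebesgue" "\<And>x. u x \<in> {0..1}"
  shows "m_p p \<Omega> u \<in> {0..1}" "p_deviation p \<Omega> u (m_p p \<Omega> u) \<le> p_deviation p \<Omega> u s"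
proof -
  let ?G = "p_deviation p \<Omega> u"
  have "(measure lebesgue \<Omega> * p)-lipschitz_on {0..1} ?G"
    using p by (intro p_deviation_lipschitz[OF \<Omega>(1) _ u]) simp
  then have "continuous_on {0..1} ?G"
    by (rule lipschitz_on_continuous_on)
  then obtain t0 where t0: "t0 \<in> {0..1}" "\<forall>s\<in>{0..1}. ?G t0 \<le> ?G s"
    using continuous_attains_inf[of "{0..1}" ?G] by auto
  have min: "?G t0 \<le> ?G s" for s
  proof -
    have "?G t0 \<le> ?G (max 0 (min 1 s))" using t0(2) by simp
    also have "\<dots> \<le> ?G s" using p by (intro p_deviation_clamp_le[OF \<Omega>(1) _ u]) simp
    finally show ?thesis .
  qed
  have unique: "t = t0" if t: "\<forall>s. ?G t \<le> ?G s" for t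
  proof (rule ccontr)
    assume "t \<noteq> t0"
    then have "2 * ?G ((t + t0) / 2) < ?G t + ?G t0"
      by (rule p_deviation_midpoint_less[OF \<Omega> p u])
    moreover have "?G t \<le> ?G t0" "?G t0 \<le> ?G ((t + t0) / 2)" using t min by blast+
    ultimately show False by linarith
  qed
  have "m_p p \<Omega> u = t0"
    unfolding m_p_eq_THE by (rule the_equality) (use min unique in auto)
  with t0(1) min show "m_p p \<Omega> u \<in> {0..1}" "?G (m_p p \<Omega> u) \<le> ?G s" by auto
qed

lemma p_deviation_m_p_tendsto:
  fixes u :: "nat \<Rightarrow> 'a::euclidean_space \<Rightarrow> real"
  assumes \<Omega>: "\<Omega> \<in> lmeasurable" "0 < measure lebesgue \<Omega>" and p: "1 < p"
    and u: "\<And>n. u n \<in> borel_measurable lebesgue" "\<And>n x. u n x \<in> {0..1}"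
    and v: "v \<in> borel_measurable lebesgue" "\<And>x. v x \<in> {0..1}"
    and lim: "\<And>x. (\<lambda>n. u n x) \<longlonglongrightarrow> v x"
  shows "(\<lambda>n. p_deviation p \<Omega> (u n) (m_p p \<Omega> (u n))) \<longlonglongrightarrow> p_deviation p \<Omega> v (m_p p \<Omega> v)"
proof -
  define L where "L n = p_deviation p \<Omega> (u n) (m_p p \<Omega> (u n))" for n
  define Lv where "Lv = p_deviation p \<Omega> v (m_p p \<Omega> v)"
  define E where "E n = (LINT x:\<Omega>|lebesgue. \<bar>u n x - v x\<bar>)" for n
  have "E \<longlonglongrightarrow> (LINT x:\<Omega>|lebesgue. 0)"
    unfolding E_def
  proof (rule set_integral_bounded_tendsto)
    show "\<Omega> \<in> sets lebesgue" "emeasure lebesgue \<Omega> \<noteq> \<infinity>"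
      using fmeasurableD[OF \<Omega>(1)] fmeasurableD2[OF \<Omega>(1)] by (auto simp: infinity_ennreal_def)
    show "(\<lambda>x. \<bar>u n x - v x\<bar>) \<in> borel_measurable lebesgue" for n
      using u(1) v(1) by measurable
    show "\<bar>\<bar>u n x - v x\<bar>\<bar> \<le> 1" for n x
      using u(2)[of n x] v(2)[of x] by auto
    show "(\<lambda>n. \<bar>u n x - v x\<bar>) \<longlonglongrightarrow> 0" for x
      using tendsto_rabs[OF tendsto_diff[OF lim tendsto_const], of x "v x"] by simp
  qed
  then have E: "E \<longlonglongrightarrow> 0" by simp
  have m_p: "m_p p \<Omega> (u n) \<in> {0..1}" "m_p p \<Omega> v \<in> {0..1}" for n
    using m_p_minimises(1)[OF \<Omega> p] u v by blast+
  have upper: "L n \<le> Lv + p * E n" for n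
  proof -
    have "L n \<le> p_deviation p \<Omega> (u n) (m_p p \<Omega> v)"
      unfolding L_def by (rule m_p_minimises(2)[OF \<Omega> p u(1) u(2)])
    also have "\<dots> \<le> Lv + p * E n"
      using p_deviation_le[OF \<Omega>(1) _ u(1)[of n] u(2)[of n] v m_p(2) m_p(2)] p
      by (simp add: Lv_def E_def)
    finally show ?thesis .
  qed
  have lower: "Lv - p * E n \<le> L n" for n
  proof -
    have "Lv \<le> p_deviation p \<Omega> v (m_p p \<Omega> (u n))"
      unfolding Lv_def by (rule m_p_minimises(2)[OF \<Omega> p v])
    also have "\<dots> \<le> L n + p * E n"
      using p_deviation_le[OF \<Omega>(1) _ v u(1)[of n] u(2)[of n] m_p(1)[of n] m_p(1)[of n]] p
      by (simp add: L_def E_def abs_minus_commute)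
    finally show ?thesis by simp
  qed
  have "(\<lambda>n. Lv - p * E n) \<longlonglongrightarrow> Lv - p * 0" "(\<lambda>n. Lv + p * E n) \<longlonglongrightarrow> Lv + p * 0"
    by (intro tendsto_intros E)+
  then have "L \<longlonglongrightarrow> Lv"
    using tendsto_sandwich[of "\<lambda>n. Lv - p * E n" L sequentially "\<lambda>n. Lv + p * E n" Lv] lower upper
    by simp
  then show ?thesis unfolding L_def Lv_def .
qed

lemma set_integral_continuous_comp_tendsto:
  fixes M :: "'b::topological_space measure" and F :: "'c::metric_space \<Rightarrow> real"
  assumes M: "finite_measure M" "sets M = sets borel" "S \<in> sets M"
    and F: "continuous_on UNIV F" and K: "compact K"
    and w: "\<And>n. continuous_on UNIV (w n)" "\<And>n z. w n z \<in> K" "\<And>z. (\<lambda>n. w n z) \<longlonglongrightarrow> W z"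
  shows "(\<lambda>n. LINT z:S|M. F (w n z)) \<longlonglongrightarrow> (LINT z:S|M. F (W z))"
proof -
  have "compact (F ` K)"
    by (rule compact_continuous_image[OF continuous_on_subset[OF F] K]) simp
  then obtain B where B: "\<And>y. y \<in> K \<Longrightarrow> \<bar>F y\<bar> \<le> B"
    using compact_imp_bounded bounded_real by (metis image_eqI)
  show ?thesis
  proof (rule set_integral_bounded_tendsto[OF M(3), where B = B])
    show "emeasure M S \<noteq> \<infinity>"
      using finite_measure.emeasure_finite[OF M(1)] by (simp add: infinity_ennreal_def)
    show "\<bar>F (w n z)\<bar> \<le> B" for n z
      using B w(2) by blast
    show "(\<lambda>z. F (w n z)) \<in> borel_measurable M" for n
      by (subst measurable_cong_sets[OF M(2) refl])
        (rule borel_measurable_continuous_onI[OF continuous_on_compose2[OF F w(1)]], simp)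
    show "(\<lambda>n. F (w n z)) \<longlonglongrightarrow> F (W z)" for z
      using F by (intro isCont_tendsto_compose[OF _ w(3)]) (simp add: continuous_on_eq_continuous_at)
  qed
qed

lemma set_integral_continuous_comp2_tendsto:
  fixes M :: "('b::topological_space \<times> 'b) measure" and f :: "real \<Rightarrow> real \<Rightarrow> real"
  assumes "finite_measure M" "sets M = sets borel" "S \<in> sets M"
    and "continuous_on UNIV (\<lambda>z. f (fst z) (snd z))"
    and u: "\<And>n. continuous_on UNIV (u n)" "\<And>n x. u n x \<in> {0..1}" "\<And>x. (\<lambda>n. u n x) \<longlonglongrightarrow> v x"
  shows "(\<lambda>n. LINT z:S|M. f (u n (fst z)) (u n (snd z))) \<longlonglongrightarrow> (LINT z:S|M. f (v (fst z)) (v (snd z)))"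
proof -
  have cont: "continuous_on UNIV (\<lambda>z. (u n (fst z), u n (snd z)))" for n
    by (intro continuous_on_Pair continuous_on_compose2[OF u(1)] continuous_intros) auto
  have range: "(u n (fst z), u n (snd z)) \<in> {0..1} \<times> {0..1}" for n z
    using u(2) by simp
  have lim: "(\<lambda>n. (u n (fst z), u n (snd z))) \<longlonglongrightarrow> (v (fst z), v (snd z))" for z
    by (intro tendsto_Pair u(3))
  show ?thesis
    using set_integral_continuous_comp_tendsto[OF assms(1-4) compact_Times[OF compact_Icc compact_Icc]
        cont range lim]
    by simp
qed

lemma lebesgue_measure_open_pos:
  fixes S :: "'a::euclidean_space set"
  assumes "open S" "S \<in> lmeasurable" "S \<noteq> {}"
  shows "0 < measure lebesgue S"
proof -
  obtain x e where "e > 0" "ball x e \<subseteq> S"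
    using assms(1,3) open_contains_ball by blast
  have "0 < measure lborel (ball x e)" using content_ball_pos[OF \<open>e > 0\<close>] .
  also have "\<dots> = measure lebesgue (ball x e)" by simp
  also have "\<dots> \<le> measure lebesgue S"
    by (rule measure_mono_fmeasurable[OF \<open>ball x e \<subseteq> S\<close>]) (use assms(2) in auto)
  finally show ?thesis .
qed

theorem proposition3p5:
  fixes \<Omega> :: "'a::euclidean_space set" and p :: real
    and f :: "real \<Rightarrow> real \<Rightarrow> real" and g :: "real \<Rightarrow> real"
    and \<mu> :: "('a \<times> 'a) measure" and \<nu> :: "'a measure"
  assumes "open \<Omega>" "connected \<Omega>" "bounded \<Omega>"
    and "1 < p"
    and "continuous_on UNIV (\<lambda>z. f (fst z) (snd z))"
    and "continuous_on UNIV g"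
    and "sets \<mu> = sets borel" "finite_measure \<mu>" "emeasure \<mu> (- (\<Omega> \<times> \<Omega>)) = 0"
    and "sets \<nu> = sets borel" "finite_measure \<nu>" "emeasure \<nu> (- \<Omega>) = 0"
    and "\<And>u. u \<in> Cc_inf \<Omega> \<Longrightarrow>
      (LINT x:\<Omega>|lebesgue. \<bar>u x - m_p p \<Omega> u\<bar> powr p)
      = (LINT z:\<Omega>\<times>\<Omega>|\<mu>. f (u (fst z)) (u (snd z))) + (LINT x:\<Omega>|\<nu>. g (u x))"
    and "open A" "A \<subseteq> \<Omega>"
  shows "(LINT x:\<Omega>|lebesgue. \<bar>indicator A x - m_p p \<Omega> (indicator A)\<bar> powr p)
      = (LINT z:\<Omega>\<times>\<Omega>|\<mu>. f (indicator A (fst z)) (indicator A (snd z)))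
        + (LINT x:\<Omega>|\<nu>. g (indicator A x))"
proof (cases "\<Omega> = {}")
  case True
  then show ?thesis by (simp add: set_lebesgue_integral_def)
next
  case False
  have \<Omega>: "\<Omega> \<in> lmeasurable" by (rule lmeasurable_open[OF assms(3,1)])
  have A: "indicator A \<in> borel_measurable lebesgue" "\<And>x. indicator A x \<in> {0..1::real}"
    using lmeasurable_open[OF bounded_subset[OF assms(3,15)] assms(14)] by (auto simp: indicator_def)
  obtain u :: "nat \<Rightarrow> 'a \<Rightarrow> real" where u: "\<And>n. u n \<in> Cc_inf \<Omega>" "\<And>n. continuous_on UNIV (u n)"
    "\<And>n x. u n x \<in> {0..1}" "\<And>x. (\<lambda>n. u n x) \<longlonglongrightarrow> indicator A x"
    using Cc_inf_approx_indicator[OF assms(14,15)] by blast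
  have "u n \<in> borel_measurable lebesgue" for n
    using continuous_imp_measurable_on_sets_lebesgue[OF u(2)] lebesgue_on_UNIV_eq by auto
  then have lhs: "(\<lambda>n. p_deviation p \<Omega> (u n) (m_p p \<Omega> (u n)))
      \<longlonglongrightarrow> p_deviation p \<Omega> (indicator A) (m_p p \<Omega> (indicator A))"
    using p_deviation_m_p_tendsto[OF \<Omega> lebesgue_measure_open_pos[OF assms(1) \<Omega> False] assms(4)]
      u(3,4) A by blast
  have "\<Omega> \<times> \<Omega> \<in> sets \<mu>" using assms(1,7) by (simp add: borel_open open_Times)
  then have rhs_\<mu>: "(\<lambda>n. LINT z:\<Omega>\<times>\<Omega>|\<mu>. f (u n (fst z)) (u n (snd z)))
      \<longlonglongrightarrow> (LINT z:\<Omega>\<times>\<Omega>|\<mu>. f (indicator A (fst z)) (indicator A (snd z)))"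
    by (rule set_integral_continuous_comp2_tendsto[OF assms(8,7) _ assms(5) u(2-4)])
  have "\<Omega> \<in> sets \<nu>" using assms(1,10) by (simp add: borel_open)
  then have rhs_\<nu>: "(\<lambda>n. LINT x:\<Omega>|\<nu>. g (u n x)) \<longlonglongrightarrow> (LINT x:\<Omega>|\<nu>. g (indicator A x))"
    by (rule set_integral_continuous_comp_tendsto[OF assms(11,10) _ assms(6) compact_Icc u(2-4)])
  have "(\<lambda>n. p_deviation p \<Omega> (u n) (m_p p \<Omega> (u n)))
      \<longlonglongrightarrow> (LINT z:\<Omega>\<times>\<Omega>|\<mu>. f (indicator A (fst z)) (indicator A (snd z)))
        + (LINT x:\<Omega>|\<nu>. g (indicator A x))"
    using tendsto_add[OF rhs_\<mu> rhs_\<nu>] assms(13)[OF u(1)] by (simp add: p_deviation_def)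
  with lhs show ?thesis
    unfolding p_deviation_def by (rule LIMSEQ_unique)
qed

end
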